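(* Consider formal expressions which are finite sums (with multiplicities) of finite products of factors $s_{ab}=\sin(\theta_b-\theta_a)$, $a<b$ natural numbers, where the $\theta_i$ are indeterminate angles. Formally, a product is a finite multiset of 2-element subsets of $\mathbb{N}$ and an expression is a finite multiset of products. An expansion step applies the identity $\sin(\theta_c-\theta_a)\sin(\theta_d-\theta_b)=\sin(\theta_b-\theta_a)\sin(\theta_d-\theta_c)+\sin(\theta_d-\theta_a)\sin(\theta_c-\theta_b)$ with $a<b<c<d$: one chooses a product $p$ in the expression containing (as members of the multiset) both $\{a,c\}$ and $\{b,d\}$ with $a<b<c<d$, removes one copy of $p$ from the expression, and adds the two products obtained from $p$ by replacing one copy each of $\{a,c\},\{b,d\}$ by $\{a,b\},\{c,d\}$, respectively by $\{a,d\},\{b,c\}$. Then, starting from any expression, repeated application of expansion steps always terminates, and the expression reached when no expansion step applies (the normal form) is uniquely determined by the starting expression.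
   Context: Multisets: a product may contain the same pair several times, and an expression may contain the same product several times; removal and addition are multiset operations. Each expansion step does not change the value of the expression as a function of the $\theta_i$. *)

theory Defs
  imports Main "HOL-Library.Multiset"
begin

text \<open>A pair {a,b} (a 2-element subset of nat) stands for sin(theta_b - theta_a), a<b.
  A product is a finite multiset of such pairs, an expression a finite multiset of products.\<close>

type_synonym product = "nat set multiset"
type_synonym expr = "product multiset"

definition valid_expr :: "expr \<Rightarrow> bool" where
  "valid_expr E \<longleftrightarrow> (\<forall>p \<in># E. \<forall>s \<in># p. card s = 2)"

definition expand_step :: "expr \<Rightarrow> expr \<Rightarrow> bool" where
  "expand_step E E' \<longleftrightarrow>
     (\<exists>p a b c d. p \<in># E \<and> a < b \<and> b < c \<and> c < d \<and>
        {a, c} \<in># p \<and> {b, d} \<in># p \<and>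
        E' = E - {#p#} +
             {# p - {#{a, c}, {b, d}#} + {#{a, b}, {c, d}#},
                p - {#{a, c}, {b, d}#} + {#{a, d}, {b, c}#} #})"

definition normal_form :: "expr \<Rightarrow> bool" where
  "normal_form E \<longleftrightarrow> (\<nexists>E'. expand_step E E')"

end

theory Submission
  imports Defs
begin

text \<open>
  Termination: if all indices are at most \<open>M\<close>, give a pair \<open>{i,j}\<close> of length \<open>L = j - i\<close> the
  weight \<open>2ML - L\<^sup>2\<close>. This is strictly concave and increasing on \<open>[0,M]\<close>, so both products
  created by an expansion step weigh strictly less than the product they replace, and the
  multiset of product weights decreases in the multiset ordering.

  Uniqueness of the normal form then follows from Newman's lemma once the step relation is
  locally confluent. Expansions in different products, or on four distinct pairs of one product,
  commute. Two different expansions of one product that share a pair involve only three pairs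
  and at most six indices; an order-preserving relabelling reduces them to the finitely many
  critical pairs on the indices \<open>0, \<dots>, 5\<close>, which are joined by running a verified normaliser.
\<close>

definition resolve_crossing :: "nat \<Rightarrow> nat \<Rightarrow> nat \<Rightarrow> nat \<Rightarrow> product \<Rightarrow> expr" where
  "resolve_crossing a b c d R =
     {#add_mset {a, b} (add_mset {c, d} R), add_mset {a, d} (add_mset {b, c} R)#}"

lemma ordered_doubleton_eq_iff:
  "(x::nat) < y \<Longrightarrow> u < v \<Longrightarrow> {x, y} = {u, v} \<longleftrightarrow> x = u \<and> y = v"
  by (auto simp: doubleton_eq_iff)

lemma multiset_split_two:
  assumes "x \<in># M" "y \<in># M" "x \<noteq> y"
  obtains R where "M = add_mset x (add_mset y R)"
proof -
  obtain R1 where R1: "M = add_mset x R1" using assms(1) by (meson multi_member_split)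
  with assms(2,3) have "y \<in># R1" by auto
  then obtain R where "R1 = add_mset y R" by (meson multi_member_split)
  with R1 that show ?thesis by blast
qed

lemma expand_stepI:
  assumes "p \<in># E" "a < b" "b < c" "c < d" "p = add_mset {a, c} (add_mset {b, d} R)"
  shows "expand_step E (E - {#p#} + resolve_crossing a b c d R)"
  using assms unfolding expand_step_def resolve_crossing_def
  by (intro exI[of _ p] exI[of _ a] exI[of _ b] exI[of _ c] exI[of _ d]) simp

lemma expand_stepE:
  assumes "expand_step E E'"
  obtains p a b c d R where "p \<in># E" "a < b" "b < c" "c < d"
    "p = add_mset {a, c} (add_mset {b, d} R)" "E' = E - {#p#} + resolve_crossing a b c d R"
proof -
  from assms obtain p a b c d where h: "p \<in># E" "a < b" "b < c" "c < d"
      "{a, c} \<in># p" "{b, d} \<in># p"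
      "E' = E - {#p#} + {# p - {#{a, c}, {b, d}#} + {#{a, b}, {c, d}#},
                          p - {#{a, c}, {b, d}#} + {#{a, d}, {b, c}#} #}"
    unfolding expand_step_def by blast
  have "{a, c} \<noteq> {b, d}" using h(2-4) by (simp add: ordered_doubleton_eq_iff)
  then obtain R where R: "p = add_mset {a, c} (add_mset {b, d} R)"
    using multiset_split_two[OF h(5,6)] by blast
  with h(7) have "E' = E - {#p#} + resolve_crossing a b c d R"
    by (simp add: resolve_crossing_def)
  with that h(1-4) R show ?thesis by blast
qed

lemma expand_step_single:
  assumes "a < b" "b < c" "c < d"
  shows "expand_step {#add_mset {a, c} (add_mset {b, d} R)#} (resolve_crossing a b c d R)"
proof -
  define p where "p = add_mset {a, c} (add_mset {b, d} R)"
  have "expand_step {#p#} ({#p#} - {#p#} + resolve_crossing a b c d R)"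
    using p_def assms by (intro expand_stepI) simp_all
  then show ?thesis unfolding p_def by simp
qed

lemma expand_step_add_left:
  assumes "expand_step E E'"
  shows "expand_step (Q + E) (Q + E')"
proof -
  obtain p a b c d R where h: "p \<in># E" "a < b" "b < c" "c < d"
      "p = add_mset {a, c} (add_mset {b, d} R)" "E' = E - {#p#} + resolve_crossing a b c d R"
    using assms by (rule expand_stepE)
  have "p \<in># Q + E" using h(1) by simp
  then have "expand_step (Q + E) (Q + E - {#p#} + resolve_crossing a b c d R)"
    by (rule expand_stepI[OF _ h(2-5)])
  moreover have "Q + E - {#p#} + resolve_crossing a b c d R = Q + E'"
    unfolding h(6) diff_union_single_conv[OF h(1)] by (rule add.assoc)
  ultimately show ?thesis by simp
qed

lemma expand_steps_add_left:
  "expand_step\<^sup>*\<^sup>* E E' \<Longrightarrow> expand_step\<^sup>*\<^sup>* (Q + E) (Q + E')"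
  by (induction rule: rtranclp_induct) (auto intro: rtranclp.rtrancl_into_rtrancl expand_step_add_left)

lemma expand_steps_add:
  assumes "expand_step\<^sup>*\<^sup>* E E'" "expand_step\<^sup>*\<^sup>* F F'"
  shows "expand_step\<^sup>*\<^sup>* (E + F) (E' + F')"
proof -
  have "expand_step\<^sup>*\<^sup>* (F + E) (F + E')" using assms(1) by (rule expand_steps_add_left)
  then have "expand_step\<^sup>*\<^sup>* (E + F) (E' + F)" by (simp only: add.commute[of F])
  moreover have "expand_step\<^sup>*\<^sup>* (E' + F) (E' + F')" using assms(2) by (rule expand_steps_add_left)
  ultimately show ?thesis by (rule rtranclp_trans)
qed

section \<open>Termination\<close>

definition chord_weight :: "nat \<Rightarrow> nat set \<Rightarrow> nat" where
  "chord_weight M s = 2 * M * (Max s - Min s) - (Max s - Min s)\<^sup>2"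

definition product_weight :: "nat \<Rightarrow> product \<Rightarrow> nat" where
  "product_weight M p = (\<Sum>s\<in>#p. chord_weight M s)"

definition indices_bounded :: "nat \<Rightarrow> expr \<Rightarrow> bool" where
  "indices_bounded M E \<longleftrightarrow> (\<forall>p\<in>#E. \<forall>s\<in>#p. s \<subseteq> {..M})"

lemma chord_weight_doubleton:
  assumes "i < j" "j \<le> M"
  shows "int (chord_weight M {i, j}) = 2 * int M * (int j - int i) - (int j - int i)\<^sup>2"
proof -
  have "(j - i)\<^sup>2 \<le> 2 * M * (j - i)"
    using assms by (simp add: power2_eq_square mult_right_mono)
  with assms show ?thesis by (simp add: chord_weight_def max_def min_def of_nat_diff)
qed

lemma chord_weight_exchange:
  assumes "a < b" "b < c" "c < d" "d \<le> M"
  shows "chord_weight M {a, b} + chord_weight M {c, d} < chord_weight M {a, c} + chord_weight M {b, d}"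
    and "chord_weight M {a, d} + chord_weight M {b, c} < chord_weight M {a, c} + chord_weight M {b, d}"
proof -
  define x y z where "x = int b - int a" and "y = int c - int b" and "z = int d - int c"
  have pos: "0 < x" "0 < y" "0 < z" "x + y + z \<le> int M"
    using assms by (auto simp: x_def y_def z_def)
  let ?w = "\<lambda>L. 2 * int M * L - L\<^sup>2"
  have w: "int (chord_weight M {a, b}) = ?w x" "int (chord_weight M {c, d}) = ?w z"
      "int (chord_weight M {a, c}) = ?w (x + y)" "int (chord_weight M {b, d}) = ?w (y + z)"
      "int (chord_weight M {a, d}) = ?w (x + y + z)" "int (chord_weight M {b, c}) = ?w y"
    using assms by (simp_all add: chord_weight_doubleton x_def y_def z_def)
  have "?w (x + y) + ?w (y + z) - ?w x - ?w z = 2 * (y * (2 * int M - x - y - z))"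
    and "?w (x + y) + ?w (y + z) - ?w (x + y + z) - ?w y = 2 * (x * z)"
    by (simp_all add: algebra_simps power2_eq_square)
  moreover have "0 < y * (2 * int M - x - y - z)" "0 < x * z"
    using pos by (auto intro: mult_pos_pos)
  ultimately show "chord_weight M {a, b} + chord_weight M {c, d} < chord_weight M {a, c} + chord_weight M {b, d}"
    and "chord_weight M {a, d} + chord_weight M {b, c} < chord_weight M {a, c} + chord_weight M {b, d}"
    using w by linarith+
qed

lemma indices_bounded_step:
  assumes "indices_bounded M E" "expand_step E E'"
  shows "indices_bounded M E'"
proof -
  obtain p a b c d R where h: "p \<in># E" "a < b" "b < c" "c < d"
      "p = add_mset {a, c} (add_mset {b, d} R)" "E' = E - {#p#} + resolve_crossing a b c d R"
    using assms(2) by (rule expand_stepE)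
  have "\<forall>s\<in>#p. s \<subseteq> {..M}" using assms(1) h(1) unfolding indices_bounded_def by blast
  then have "\<forall>q\<in>#resolve_crossing a b c d R. \<forall>s\<in>#q. s \<subseteq> {..M}"
    using h(2-5) by (auto simp: resolve_crossing_def)
  then show ?thesis using assms(1) unfolding h(6) indices_bounded_def by (auto dest: in_diffD)
qed

lemma product_weights_decrease:
  assumes "indices_bounded M E" "expand_step E E'"
  shows "(image_mset (product_weight M) E', image_mset (product_weight M) E) \<in> mult less_than"
proof -
  obtain p a b c d R where h: "p \<in># E" "a < b" "b < c" "c < d"
      "p = add_mset {a, c} (add_mset {b, d} R)" "E' = E - {#p#} + resolve_crossing a b c d R"
    using assms(2) by (rule expand_stepE)
  let ?f = "product_weight M"
  have "d \<le> M" using assms(1) h(1,5) unfolding indices_bounded_def by auto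
  then have lt: "\<forall>w\<in>#image_mset ?f (resolve_crossing a b c d R). (w, ?f p) \<in> less_than"
    using chord_weight_exchange[OF h(2-4)] unfolding h(5)
    by (simp add: resolve_crossing_def product_weight_def)
  have E: "image_mset ?f E = image_mset ?f (E - {#p#}) + {#?f p#}"
    using h(1) by (metis add_mset_add_single image_mset_add_mset insert_DiffM)
  have E': "image_mset ?f E' = image_mset ?f (E - {#p#}) + image_mset ?f (resolve_crossing a b c d R)"
    unfolding h(6) by (rule image_mset_union)
  show ?thesis unfolding E E' by (rule one_step_implies_mult) (use lt in auto)
qed

lemma wf_bounded_expand_step: "wf {(E', E). indices_bounded M E \<and> expand_step E E'}"
proof (rule wf_subset)
  show "wf (inv_image (mult less_than) (image_mset (product_weight M)))"
    by (intro wf_inv_image wf_mult wf_less_than)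
  show "{(E', E). indices_bounded M E \<and> expand_step E E'}
      \<subseteq> inv_image (mult less_than) (image_mset (product_weight M))"
    using product_weights_decrease by auto
qed

lemma valid_expr_indices_bounded:
  assumes "valid_expr E"
  obtains M where "indices_bounded M E"
proof -
  have "finite s" if "p \<in># E" "s \<in># p" for p s
    using assms that unfolding valid_expr_def by (metis card.infinite zero_neq_numeral)
  then have "finite (\<Union>p\<in>set_mset E. \<Union>(set_mset p))" by auto
  then obtain M where "\<forall>v\<in>(\<Union>p\<in>set_mset E. \<Union>(set_mset p)). v \<le> M"
    using finite_nat_set_iff_bounded_le by blast
  then show ?thesis by (intro that) (auto simp: indices_bounded_def)
qed

section \<open>Newman's lemma relative to an invariant\<close>

lemma rtranclp_invariant:
  assumes "r\<^sup>*\<^sup>* x y" "I x" "\<And>x y. I x \<Longrightarrow> r x y \<Longrightarrow> I y"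
  shows "I y"
  using assms(1,2) by (induction rule: rtranclp_induct) (auto intro: assms(3))

lemma no_infinite_chain_on:
  assumes wf: "wf {(y, x). I x \<and> r x y}" and inv: "\<And>x y. I x \<Longrightarrow> r x y \<Longrightarrow> I y" and "I x"
  shows "\<nexists>f. f 0 = x \<and> (\<forall>i. r (f i) (f (Suc i)))"
proof
  assume "\<exists>f. f 0 = x \<and> (\<forall>i. r (f i) (f (Suc i)))"
  then obtain f where f: "f 0 = x" "\<And>i. r (f i) (f (Suc i))" by blast
  have "I (f i)" for i by (induction i) (use f \<open>I x\<close> inv in auto)
  with f(2) have "\<forall>i. (f (Suc i), f i) \<in> {(y, x). I x \<and> r x y}" by simp
  with wf show False unfolding wf_iff_no_infinite_down_chain by blast
qed

lemma normal_form_exists_on: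
  assumes wf: "wf {(y, x). I x \<and> r x y}" and inv: "\<And>x y. I x \<Longrightarrow> r x y \<Longrightarrow> I y"
  shows "I x \<Longrightarrow> \<exists>n. r\<^sup>*\<^sup>* x n \<and> (\<nexists>u. r n u)"
proof (induction x rule: wf_induct_rule[OF wf])
  case (1 x)
  show ?case
  proof (cases "\<exists>u. r x u")
    case True
    then obtain u where u: "r x u" by blast
    with "1.prems" inv have "I u" by blast
    with "1.IH" u "1.prems" obtain n where "r\<^sup>*\<^sup>* u n" "\<nexists>v. r n v" by blast
    with u show ?thesis by (meson converse_rtranclp_into_rtranclp)
  qed blast
qed

lemma newman_on:
  assumes wf: "wf {(y, x). I x \<and> r x y}" and inv: "\<And>x y. I x \<Longrightarrow> r x y \<Longrightarrow> I y"
    and local_confluence: "\<And>x y z. I x \<Longrightarrow> r x y \<Longrightarrow> r x z \<Longrightarrow> \<exists>w. r\<^sup>*\<^sup>* y w \<and> r\<^sup>*\<^sup>* z w"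
  shows "I x \<Longrightarrow> r\<^sup>*\<^sup>* x y \<Longrightarrow> \<nexists>u. r y u \<Longrightarrow> r\<^sup>*\<^sup>* x z \<Longrightarrow> \<nexists>u. r z u \<Longrightarrow> y = z"
proof (induction x arbitrary: y z rule: wf_induct_rule[OF wf])
  case (1 x)
  show ?case
  proof (cases "\<exists>u. r x u")
    case False
    with "1.prems"(2,4) show ?thesis by (metis converse_rtranclpE)
  next
    case True
    with "1.prems"(2,3) obtain y1 where xy1: "r x y1" and y1y: "r\<^sup>*\<^sup>* y1 y"
      by (metis converse_rtranclpE)
    from True "1.prems"(4,5) obtain z1 where xz1: "r x z1" and z1z: "r\<^sup>*\<^sup>* z1 z"
      by (metis converse_rtranclpE)
    obtain w where y1w: "r\<^sup>*\<^sup>* y1 w" and z1w: "r\<^sup>*\<^sup>* z1 w"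
      using local_confluence[OF "1.prems"(1) xy1 xz1] by blast
    have "I y1" "I z1" using inv "1.prems"(1) xy1 xz1 by blast+
    have "I w" using y1w \<open>I y1\<close> by (rule rtranclp_invariant) (rule inv)
    then obtain n where wn: "r\<^sup>*\<^sup>* w n" and "\<nexists>u. r n u"
      using normal_form_exists_on[of I r w] wf inv by blast
    then have "y = n" "z = n"
      using "1.IH"[of y1 y n] "1.IH"[of z1 z n] \<open>I y1\<close> \<open>I z1\<close> "1.prems" xy1 xz1 y1y z1z y1w z1w
      by (auto intro: rtranclp_trans)
    then show ?thesis by simp
  qed
qed

definition joinable :: "expr \<Rightarrow> expr \<Rightarrow> bool" where
  "joinable E F \<longleftrightarrow> (\<exists>G. expand_step\<^sup>*\<^sup>* E G \<and> expand_step\<^sup>*\<^sup>* F G)"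

lemma joinable_add_left: "joinable E F \<Longrightarrow> joinable (Q + E) (Q + F)"
  unfolding joinable_def by (blast intro: expand_steps_add_left)

definition relabel :: "(nat \<Rightarrow> nat) \<Rightarrow> product \<Rightarrow> expr \<Rightarrow> expr" where
  "relabel g r E = image_mset (\<lambda>p. image_mset (image g) p + r) E"

lemma relabel_resolve_crossing:
  "relabel g r (resolve_crossing a b c d R)
   = resolve_crossing (g a) (g b) (g c) (g d) (image_mset (image g) R + r)"
  by (simp add: relabel_def resolve_crossing_def)

lemma expand_step_relabel:
  assumes "strict_mono g" "expand_step E E'"
  shows "expand_step (relabel g r E) (relabel g r E')"
proof -
  obtain p a b c d R where h: "p \<in># E" "a < b" "b < c" "c < d"
      "p = add_mset {a, c} (add_mset {b, d} R)" "E' = E - {#p#} + resolve_crossing a b c d R"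
    using assms(2) by (rule expand_stepE)
  let ?p = "image_mset (image g) p + r"
  have mem: "?p \<in># relabel g r E" using h(1) unfolding relabel_def by simp
  have lt: "g a < g b" "g b < g c" "g c < g d"
    using h(2-4) assms(1) by (simp_all add: strict_mono_less)
  have p: "?p = add_mset {g a, g c} (add_mset {g b, g d} (image_mset (image g) R + r))"
    unfolding h(5) by simp
  have "relabel g r E' = relabel g r E - {#?p#} + relabel g r (resolve_crossing a b c d R)"
    using h(1) unfolding h(6) relabel_def by (simp add: image_mset_Diff)
  then show ?thesis unfolding relabel_resolve_crossing by (simp only: expand_stepI[OF mem lt p])
qed

lemma joinable_relabel:
  assumes "strict_mono g" "joinable E F"
  shows "joinable (relabel g r E) (relabel g r F)"
proof -
  have steps: "expand_step\<^sup>*\<^sup>* (relabel g r X) (relabel g r Y)" if "expand_step\<^sup>*\<^sup>* X Y" for X Y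
    using that by (induction rule: rtranclp_induct)
      (auto intro: rtranclp.rtrancl_into_rtrancl expand_step_relabel[OF assms(1)])
  from assms(2) show ?thesis unfolding joinable_def by (blast intro: steps)
qed

section \<open>Critical pairs sharing a pair, by evaluation\<close>

text \<open>
  Quadruples \<open>(a, b, c, d)\<close> stand for the two crossing pairs \<open>{a, c}\<close> and \<open>{b, d}\<close>; a product
  is represented by a list of index pairs \<open>(i, j)\<close>, \<open>i < j\<close>.
\<close>

type_synonym quad = "nat \<times> nat \<times> nat \<times> nat"

fun crossing :: "quad \<Rightarrow> bool" where
  "crossing (a, b, c, d) \<longleftrightarrow> a < b \<and> b < c \<and> c < d"

fun map_quad :: "(nat \<Rightarrow> nat) \<Rightarrow> quad \<Rightarrow> quad" where
  "map_quad g (a, b, c, d) = (g a, g b, g c, g d)"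

fun shares_chord :: "quad \<Rightarrow> quad \<Rightarrow> bool" where
  "shares_chord (a, b, c, d) (a', b', c', d') \<longleftrightarrow> {(a', c'), (b', d')} \<inter> {(a, c), (b, d)} \<noteq> {}"

fun three_chords :: "quad \<Rightarrow> quad \<Rightarrow> (nat \<times> nat) list" where
  "three_chords (a, b, c, d) (a', b', c', d') =
     [(a, c), (b, d), if (a', c') \<in> {(a, c), (b, d)} then (b', d') else (a', c')]"

fun resolve_list :: "(nat \<times> nat) list \<Rightarrow> quad \<Rightarrow> (nat \<times> nat) list list" where
  "resolve_list L (a, b, c, d) =
     (let rest = remove1 (b, d) (remove1 (a, c) L) in [(a, b) # (c, d) # rest, (a, d) # (b, c) # rest])"

definition find_crossing :: "(nat \<times> nat) list \<Rightarrow> quad option" where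
  "find_crossing L = map_option (\<lambda>((a, c), (b, d)). (a, b, c, d))
     (find (\<lambda>((a, c), (b, d)). a < b \<and> b < c \<and> c < d) (List.product L L))"

fun expand_first :: "(nat \<times> nat) list list \<Rightarrow> (nat \<times> nat) list list option" where
  "expand_first [] = None"
| "expand_first (L # P) = (case find_crossing L of
     Some q \<Rightarrow> Some (resolve_list L q @ P)
   | None \<Rightarrow> map_option ((#) L) (expand_first P))"

text \<open>The fuel only bounds evaluation: \<open>normalise\<close> is sound for any fuel, and 30 steps reach the
  normal forms in the check below.\<close>

fun normalise :: "nat \<Rightarrow> (nat \<times> nat) list list \<Rightarrow> (nat \<times> nat) list list" where
  "normalise 0 P = P"
| "normalise (Suc n) P = (case expand_first P of None \<Rightarrow> P | Some P' \<Rightarrow> normalise n P')"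

definition critical_pair_joins :: "quad \<Rightarrow> quad \<Rightarrow> bool" where
  "critical_pair_joins q q' \<longleftrightarrow>
     (let T = three_chords q q' in
      mset (map mset (normalise 30 (resolve_list T q)))
      = mset (map mset (normalise 30 (resolve_list T q'))))"

definition quads_below :: "nat \<Rightarrow> quad list" where
  "quads_below n = [(a, b, c, d). d \<leftarrow> [0..<n], c \<leftarrow> [0..<d], b \<leftarrow> [0..<c], a \<leftarrow> [0..<b]]"

lemma quads_below_iff: "(a, b, c, d) \<in> set (quads_below n) \<longleftrightarrow> crossing (a, b, c, d) \<and> d < n"
  by (auto simp: quads_below_def image_iff)

lemma critical_pairs_below_six:
  "\<forall>q\<in>set (quads_below 6). \<forall>q'\<in>set (quads_below 6). shares_chord q q' \<longrightarrow> critical_pair_joins q q'"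
  by code_simp

definition chord :: "nat \<times> nat \<Rightarrow> nat set" where
  "chord x = {fst x, snd x}"

definition product_of :: "(nat \<times> nat) list \<Rightarrow> product" where
  "product_of L = mset (map chord L)"

definition expr_of :: "(nat \<times> nat) list list \<Rightarrow> expr" where
  "expr_of P = mset (map product_of P)"

lemma product_of_remove1:
  "x \<in> set L \<Longrightarrow> product_of L = add_mset (chord x) (product_of (remove1 x L))"
  by (induction L) (auto simp: product_of_def)

lemma resolve_list_sound:
  assumes "(a, c) \<in> set L" "(b, d) \<in> set (remove1 (a, c) L)"
  obtains R where "product_of L = add_mset {a, c} (add_mset {b, d} R)"
    "expr_of (resolve_list L (a, b, c, d)) = resolve_crossing a b c d R"
proof
  let ?R = "product_of (remove1 (b, d) (remove1 (a, c) L))"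
  show "product_of L = add_mset {a, c} (add_mset {b, d} ?R)"
    using product_of_remove1[OF assms(1)] product_of_remove1[OF assms(2)] by (simp add: chord_def)
  show "expr_of (resolve_list L (a, b, c, d)) = resolve_crossing a b c d ?R"
    by (simp add: Let_def expr_of_def product_of_def chord_def resolve_crossing_def)
qed

lemma find_crossing_SomeD:
  assumes "find_crossing L = Some (a, b, c, d)"
  shows "a < b \<and> b < c \<and> c < d \<and> (a, c) \<in> set L \<and> (b, d) \<in> set (remove1 (a, c) L)"
proof -
  obtain v where v: "find (\<lambda>((a, c), (b, d)). a < b \<and> b < c \<and> c < d) (List.product L L) = Some v"
      "(\<lambda>((a, c), (b, d)). (a, b, c, d)) v = (a, b, c, d)"
    using assms unfolding find_crossing_def by auto
  from v(1) obtain i where "i < length (List.product L L)" "List.product L L ! i = v"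
      "(\<lambda>((a, c), (b, d)). a < b \<and> b < c \<and> c < d) v"
    unfolding find_Some_iff by auto
  moreover from this(1,2) have "v \<in> set (List.product L L)" by (metis nth_mem)
  ultimately show ?thesis using v(2) by (cases v) (auto simp: in_set_remove1)
qed

lemma expr_of_Cons: "expr_of (L # P) = {#product_of L#} + expr_of P"
  by (simp add: expr_of_def)

lemma expand_first_sound: "expand_first P = Some P' \<Longrightarrow> expand_step (expr_of P) (expr_of P')"
proof (induction P arbitrary: P')
  case Nil
  then show ?case by simp
next
  case (Cons L P)
  show ?case
  proof (cases "find_crossing L")
    case None
    with Cons.prems obtain P0 where "expand_first P = Some P0" "P' = L # P0" by auto
    with Cons.IH show ?thesis by (simp only: expr_of_Cons expand_step_add_left)
  next
    case (Some q)
    obtain a b c d where q: "q = (a, b, c, d)" by (cases q)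
    with Some have h: "a < b" "b < c" "c < d" "(a, c) \<in> set L" "(b, d) \<in> set (remove1 (a, c) L)"
      using find_crossing_SomeD by blast+
    obtain R where R: "product_of L = add_mset {a, c} (add_mset {b, d} R)"
        "expr_of (resolve_list L (a, b, c, d)) = resolve_crossing a b c d R"
      using resolve_list_sound[OF h(4,5)] by blast
    have "expand_step (expr_of (L # P)) (expr_of (L # P) - {#product_of L#} + resolve_crossing a b c d R)"
      by (rule expand_stepI[OF _ h(1-3) R(1)]) (simp add: expr_of_def)
    moreover have "P' = resolve_list L q @ P" using Cons.prems Some by simp
    ultimately show ?thesis using R(2) q by (simp add: expr_of_def add.commute)
  qed
qed

lemma normalise_sound: "expand_step\<^sup>*\<^sup>* (expr_of P) (expr_of (normalise n P))"
proof (induction n arbitrary: P)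
  case (Suc n)
  then show ?case
    by (cases "expand_first P") (auto intro: converse_rtranclp_into_rtranclp expand_first_sound)
qed simp

lemma expr_of_conv_mset_map: "expr_of P = image_mset (image_mset chord) (mset (map mset P))"
  by (induction P) (auto simp: expr_of_def product_of_def)

lemma critical_pair_joins_sound:
  assumes "critical_pair_joins q q'"
  shows "joinable (expr_of (resolve_list (three_chords q q') q)) (expr_of (resolve_list (three_chords q q') q'))"
proof -
  let ?T = "three_chords q q'"
  have "expr_of (normalise 30 (resolve_list ?T q)) = expr_of (normalise 30 (resolve_list ?T q'))"
    using assms unfolding critical_pair_joins_def Let_def expr_of_conv_mset_map by simp
  then show ?thesis unfolding joinable_def by (metis normalise_sound)
qed

lemma crossing_map_quad: "strict_mono g \<Longrightarrow> crossing (map_quad g q) \<longleftrightarrow> crossing q"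
  by (cases q) (simp add: strict_mono_less)

lemma shares_chord_map_quad:
  "inj g \<Longrightarrow> shares_chord (map_quad g q) (map_quad g q') \<longleftrightarrow> shares_chord q q'"
  by (cases q; cases q') (auto simp: inj_eq)

lemma three_chords_map_quad:
  "inj g \<Longrightarrow> three_chords (map_quad g q) (map_quad g q') = map (map_prod g g) (three_chords q q')"
  by (cases q; cases q') (auto simp: inj_eq)

lemma remove1_map_inj: "inj f \<Longrightarrow> remove1 (f x) (map f xs) = map f (remove1 x xs)"
  by (induction xs) (auto simp: inj_eq)

lemma resolve_list_map_quad:
  assumes "inj g"
  shows "resolve_list (map (map_prod g g) L) (map_quad g q) = map (map (map_prod g g)) (resolve_list L q)"
proof -
  obtain a b c d where q: "q = (a, b, c, d)" by (cases q)
  have "inj (map_prod g g)" using assms by (intro prod.inj_map)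
  then have "remove1 (g b, g d) (remove1 (g a, g c) (map (map_prod g g) L))
      = map (map_prod g g) (remove1 (b, d) (remove1 (a, c) L))"
    using remove1_map_inj[of "map_prod g g" "(a, c)"] remove1_map_inj[of "map_prod g g" "(b, d)"] by simp
  then show ?thesis by (simp add: q Let_def)
qed

lemma relabel_expr_of: "relabel g {#} (expr_of P) = expr_of (map (map (map_prod g g)) P)"
  by (simp add: relabel_def expr_of_def product_of_def chord_def multiset.map_comp comp_def)

lemma strict_mono_covering:
  assumes "finite V" "card V \<le> n"
  obtains g :: "nat \<Rightarrow> nat" where "strict_mono g" "V \<subseteq> g ` {..<n}"
proof -
  obtain xs where xs: "sorted_wrt (<) xs" "set xs = V"
    using ex1_sorted_list_for_set_if_finite[OF assms(1)] by blast
  then have len: "length xs \<le> n" using assms(2) by (metis distinct_card strict_sorted_iff)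
  define g where "g i = (if i < length xs then xs ! i else Max V + 1 + i)" for i
  have "g i < g j" if "i < j" for i j
  proof (cases "j < length xs")
    case True
    with that xs(1) show ?thesis by (simp add: g_def sorted_wrt_nth_less)
  next
    case False
    have "xs ! i \<le> Max V" if "i < length xs" using that xs(2) assms(1) by auto
    with False \<open>i < j\<close> show ?thesis by (auto simp: g_def)
  qed
  then have "strict_mono g" by (rule strict_monoI)
  moreover have "V \<subseteq> g ` {..<n}"
  proof
    fix v assume "v \<in> V"
    then obtain i where "i < length xs" "xs ! i = v" using xs(2) by (auto simp: in_set_conv_nth)
    with len show "v \<in> g ` {..<n}" by (auto simp: g_def image_iff intro!: bexI[of _ i])
  qed
  ultimately show ?thesis by (rule that)
qed

lemma critical_pairs_join:
  assumes "crossing q" "crossing q'" "shares_chord q q'"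
  shows "joinable (expr_of (resolve_list (three_chords q q') q))
                  (expr_of (resolve_list (three_chords q q') q'))"
proof -
  obtain a b c d a' b' c' d' where q: "q = (a, b, c, d)" and q': "q' = (a', b', c', d')"
    by (metis prod_cases4)
  define V where "V = {a, b, c, d, a', b', c', d'}"
  define xs where "xs = [a, b, c, d, if (a', c') \<in> {(a, c), (b, d)} then b' else a',
                                     if (a', c') \<in> {(a, c), (b, d)} then d' else c']"
  have "V \<subseteq> set xs" using assms(3) unfolding V_def xs_def q q' by auto
  then have "card V \<le> length xs" using card_mono[OF finite_set] card_length[of xs] by (metis le_trans)
  then have "card V \<le> 6" by (simp add: xs_def)
  moreover have "finite V" by (simp add: V_def)
  ultimately obtain g where g: "strict_mono g" "V \<subseteq> g ` {..<6::nat}"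
    using strict_mono_covering by blast
  define h where "h = inv_into {..<6::nat} g"
  have gh: "g (h v) = v" "h v < 6" if "v \<in> V" for v
    using that g(2) inv_into_into[of v g "{..<6}"] unfolding h_def by (auto simp: f_inv_into_f)
  have inj: "inj g" using g(1) by (simp add: strict_mono_on_imp_inj_on)
  define q0 q0' where "q0 = map_quad h q" and "q0' = map_quad h q'"
  have qq: "q = map_quad g q0" "q' = map_quad g q0'"
    using gh unfolding q0_def q0'_def q q' V_def by auto
  have "crossing q0" "crossing q0'" using assms(1,2) crossing_map_quad[OF g(1)] qq by metis+
  then have "q0 \<in> set (quads_below 6)" "q0' \<in> set (quads_below 6)"
    using gh unfolding q0_def q0'_def q q' V_def by (simp_all add: quads_below_iff)
  moreover have "shares_chord q0 q0'" using assms(3) unfolding qq shares_chord_map_quad[OF inj] .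
  ultimately have "critical_pair_joins q0 q0'" using critical_pairs_below_six by blast
  then have "joinable (relabel g {#} (expr_of (resolve_list (three_chords q0 q0') q0)))
                      (relabel g {#} (expr_of (resolve_list (three_chords q0 q0') q0')))"
    by (intro joinable_relabel g(1) critical_pair_joins_sound)
  then show ?thesis
    unfolding relabel_expr_of qq three_chords_map_quad[OF inj] resolve_list_map_quad[OF inj] .
qed

section \<open>Local confluence\<close>

lemma disjoint_crossings_join:
  assumes "a < b" "b < c" "c < d" "a' < b'" "b' < c'" "c' < d'"
  shows "joinable (resolve_crossing a b c d (add_mset {a', c'} (add_mset {b', d'} S)))
                  (resolve_crossing a' b' c' d' (add_mset {a, c} (add_mset {b, d} S)))"
proof -
  define X1 X2 where "X1 = add_mset {a, b} (add_mset {c, d} S)" and "X2 = add_mset {a, d} (add_mset {b, c} S)"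
  define Y1 Y2 where "Y1 = add_mset {a', b'} (add_mset {c', d'} S)" and "Y2 = add_mset {a', d'} (add_mset {b', c'} S)"
  have "resolve_crossing a b c d (add_mset {a', c'} (add_mset {b', d'} S))
      = {#add_mset {a', c'} (add_mset {b', d'} X1)#} + {#add_mset {a', c'} (add_mset {b', d'} X2)#}"
    by (simp add: resolve_crossing_def X1_def X2_def add_mset_commute)
  then have 1: "expand_step\<^sup>*\<^sup>* (resolve_crossing a b c d (add_mset {a', c'} (add_mset {b', d'} S)))
      (resolve_crossing a' b' c' d' X1 + resolve_crossing a' b' c' d' X2)"
    by (simp only:) (intro expand_steps_add r_into_rtranclp expand_step_single assms(4-6))
  have "resolve_crossing a' b' c' d' (add_mset {a, c} (add_mset {b, d} S))
      = {#add_mset {a, c} (add_mset {b, d} Y1)#} + {#add_mset {a, c} (add_mset {b, d} Y2)#}"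
    by (simp add: resolve_crossing_def Y1_def Y2_def add_mset_commute)
  then have 2: "expand_step\<^sup>*\<^sup>* (resolve_crossing a' b' c' d' (add_mset {a, c} (add_mset {b, d} S)))
      (resolve_crossing a b c d Y1 + resolve_crossing a b c d Y2)"
    by (simp only:) (intro expand_steps_add r_into_rtranclp expand_step_single assms(1-3))
  have "resolve_crossing a' b' c' d' X1 + resolve_crossing a' b' c' d' X2
      = resolve_crossing a b c d Y1 + resolve_crossing a b c d Y2"
    by (simp add: resolve_crossing_def X1_def X2_def Y1_def Y2_def add_mset_commute)
  with 1 2 show ?thesis unfolding joinable_def by metis
qed

lemma overlapping_crossings_join:
  assumes "crossing (a, b, c, d)" "crossing (a', b', c', d')"
    and "shares_chord (a, b, c, d) (a', b', c', d')" "(a', b', c', d') \<noteq> (a, b, c, d)"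
    and p: "add_mset {a, c} (add_mset {b, d} R) = add_mset {a', c'} (add_mset {b', d'} R')"
  shows "joinable (resolve_crossing a b c d R) (resolve_crossing a' b' c' d' R')"
proof -
  define T where "T = three_chords (a, b, c, d) (a', b', c', d')"
  define z where "z = (if (a', c') \<in> {(a, c), (b, d)} then (b', d') else (a', c'))"
  have T: "T = [(a, c), (b, d), z]" by (simp add: T_def z_def)
  have z: "z \<in> {(a', c'), (b', d')}" "z \<notin> {(a, c), (b, d)}" "fst z < snd z"
    using assms(1-4) by (auto simp: z_def)
  then have "chord z \<noteq> {a, c}" "chord z \<noteq> {b, d}"
    using assms(1) by (cases z; auto simp: chord_def ordered_doubleton_eq_iff)+
  moreover have "chord z \<in># add_mset {a, c} (add_mset {b, d} R)"
    unfolding p using z(1) by (auto simp: chord_def)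
  ultimately have "chord z \<in># R" by simp
  then obtain r where r: "R = add_mset (chord z) r" by (meson multi_member_split)
  have "(a, c) \<in> set T" "(b, d) \<in> set (remove1 (a, c) T)" using assms(1) by (auto simp: T)
  then obtain R0 where R0: "product_of T = add_mset {a, c} (add_mset {b, d} R0)"
      "expr_of (resolve_list T (a, b, c, d)) = resolve_crossing a b c d R0"
    by (rule resolve_list_sound)
  have "(a', c') \<in> set T" "(b', d') \<in> set (remove1 (a', c') T)"
    using assms(1-4) z by (auto simp: T z_def)
  then obtain R0' where R0': "product_of T = add_mset {a', c'} (add_mset {b', d'} R0')"
      "expr_of (resolve_list T (a', b', c', d')) = resolve_crossing a' b' c' d' R0'"
    by (rule resolve_list_sound)
  have T_chords: "product_of T = add_mset {a, c} (add_mset {b, d} {#chord z#})"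
    by (simp add: T product_of_def chord_def)
  with R0(1) r have R: "R = R0 + r" by simp
  from p have "add_mset {a', c'} (add_mset {b', d'} R') = product_of T + r"
    unfolding T_chords r by simp
  with R0'(1) have R': "R' = R0' + r" by simp
  have "joinable (relabel id r (expr_of (resolve_list T (a, b, c, d))))
                 (relabel id r (expr_of (resolve_list T (a', b', c', d'))))"
    unfolding T_def using assms(1-3)
    by (intro joinable_relabel critical_pairs_join) (simp_all add: strict_mono_def)
  then show ?thesis unfolding R0(2) R0'(2) relabel_resolve_crossing R R' by simp
qed

lemma crossing_resolutions_join:
  assumes "a < b" "b < c" "c < d" "a' < b'" "b' < c'" "c' < d'"
    and p: "add_mset {a, c} (add_mset {b, d} R) = add_mset {a', c'} (add_mset {b', d'} R')"
  shows "joinable (resolve_crossing a b c d R) (resolve_crossing a' b' c' d' R')"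
proof -
  consider (same) "(a', b', c', d') = (a, b, c, d)"
    | (overlap) "(a', b', c', d') \<noteq> (a, b, c, d)" "shares_chord (a, b, c, d) (a', b', c', d')"
    | (disjoint) "\<not> shares_chord (a, b, c, d) (a', b', c', d')"
    by blast
  then show ?thesis
  proof cases
    case same
    with p have "R = R'" by simp
    with same show ?thesis by (auto simp: joinable_def)
  next
    case overlap
    with assms show ?thesis by (intro overlapping_crossings_join) simp_all
  next
    case disjoint
    then have ne: "{a', c'} \<noteq> {a, c}" "{a', c'} \<noteq> {b, d}" "{b', d'} \<noteq> {a, c}" "{b', d'} \<noteq> {b, d}"
        "{a', c'} \<noteq> {b', d'}"
      using assms(1-6) by (auto simp: ordered_doubleton_eq_iff)
    have "{a', c'} \<in># add_mset {a, c} (add_mset {b, d} R)" "{b', d'} \<in># add_mset {a, c} (add_mset {b, d} R)"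
      unfolding p by simp_all
    with ne have "{a', c'} \<in># R" "{b', d'} \<in># R" by simp_all
    then obtain S where S: "R = add_mset {a', c'} (add_mset {b', d'} S)"
      using ne(5) by (rule multiset_split_two)
    with p have "R' = add_mset {a, c} (add_mset {b, d} S)" by (simp add: add_mset_commute)
    with S show ?thesis using assms(1-6) by (simp add: disjoint_crossings_join)
  qed
qed

lemma expand_step_local_confluence:
  assumes "expand_step E E1" "expand_step E E2"
  shows "joinable E1 E2"
proof -
  obtain p a b c d R where h1: "p \<in># E" "a < b" "b < c" "c < d"
      "p = add_mset {a, c} (add_mset {b, d} R)" "E1 = E - {#p#} + resolve_crossing a b c d R"
    using assms(1) by (rule expand_stepE)
  obtain p' a' b' c' d' R' where h2: "p' \<in># E" "a' < b'" "b' < c'" "c' < d'"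
      "p' = add_mset {a', c'} (add_mset {b', d'} R')" "E2 = E - {#p'#} + resolve_crossing a' b' c' d' R'"
    using assms(2) by (rule expand_stepE)
  show ?thesis
  proof (cases "p = p'")
    case True
    have "joinable (E - {#p#} + resolve_crossing a b c d R) (E - {#p#} + resolve_crossing a' b' c' d' R')"
      using True h1(2-5) h2(2-5) by (intro joinable_add_left crossing_resolutions_join) simp_all
    with True h1(6) h2(6) show ?thesis by simp
  next
    case False
    then obtain E0 where E0: "E = add_mset p (add_mset p' E0)"
      using multiset_split_two[OF h1(1) h2(1)] by blast
    define G where "G = E0 + resolve_crossing a b c d R + resolve_crossing a' b' c' d' R'"
    have E1: "E1 = add_mset p' (E0 + resolve_crossing a b c d R)" using h1(6) E0 by simp
    have E2: "E2 = add_mset p (E0 + resolve_crossing a' b' c' d' R')"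
      using h2(6) E0 by (simp add: add_mset_commute)
    have "expand_step E1 (E1 - {#p'#} + resolve_crossing a' b' c' d' R')"
      by (rule expand_stepI[OF _ h2(2-5)]) (simp add: E1)
    moreover have "E1 - {#p'#} + resolve_crossing a' b' c' d' R' = G" by (simp add: E1 G_def)
    moreover have "expand_step E2 (E2 - {#p#} + resolve_crossing a b c d R)"
      by (rule expand_stepI[OF _ h1(2-5)]) (simp add: E2)
    moreover have "E2 - {#p#} + resolve_crossing a b c d R = G"
      by (simp add: E2 G_def add.commute add.left_commute)
    ultimately show ?thesis unfolding joinable_def by (metis r_into_rtranclp)
  qed
qed

theorem theoremt:
  fixes E :: expr
  assumes "valid_expr E"
  shows "(\<nexists>f :: nat \<Rightarrow> expr. f 0 = E \<and> (\<forall>i. expand_step (f i) (f (Suc i))))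
       \<and> (\<forall>N1 N2. expand_step\<^sup>*\<^sup>* E N1 \<and> normal_form N1 \<and>
                  expand_step\<^sup>*\<^sup>* E N2 \<and> normal_form N2 \<longrightarrow> N1 = N2)"
proof -
  obtain M where bounded: "indices_bounded M E"
    using assms by (rule valid_expr_indices_bounded)
  note wf = wf_bounded_expand_step[of M]
  note inv = indices_bounded_step[of M]
  have "\<nexists>f. f 0 = E \<and> (\<forall>i. expand_step (f i) (f (Suc i)))"
    using no_infinite_chain_on[of "indices_bounded M" expand_step E] wf inv bounded by blast
  moreover have "N1 = N2"
    if "expand_step\<^sup>*\<^sup>* E N1" "normal_form N1" "expand_step\<^sup>*\<^sup>* E N2" "normal_form N2" for N1 N2
    using newman_on[of "indices_bounded M" expand_step E N1 N2] wf inv bounded that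
      expand_step_local_confluence
    unfolding normal_form_def joinable_def by blast
  ultimately show ?thesis by blast
qed

end
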